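(* For every $\epsilon\in(0,1)$ there exist $n_\epsilon>0$ and $c_\epsilon>0$ such that for every $n>n_\epsilon$ there exist a read-once DNF formula $f:\{0,1\}^n\to\{0,1\}$ and a cost vector $c\in\mathbb{R}_{>0}^n$ such that, under the uniform distribution ($p_i=1/2$ for all $i$), $$\mathsf{OPT}_{\mathcal N}(f,c,p)\ge c_\epsilon\,\frac{n^{1-\epsilon}}{\log n}\cdot \mathsf{OPT}_{\mathcal A}(f,c,p).$$
   Context: Stochastic Boolean Function Evaluation (SBFE) setup: $f:\{0,1\}^n\to\{0,1\}$ is a known Boolean function, $c\in\mathbb{R}_{>0}^n$ a cost vector and $p\in(0,1)^n$ a probability vector. The unknown input $x\in\{0,1\}^n$ is random with independent coordinates and $\Pr(x_i=1)=p_i$. The value $x_i$ can only be learned by testing variable $i$, at cost $c_i$. A strategy tests variables sequentially until $f(x)$ is determined, i.e. until $f(x')=f(x)$ for every $x'$ agreeing with $x$ on all tested coordinates. An adaptive strategy is a decision tree (the next test may depend on previous outcomes); a non-adaptive strategy is a fixed permutation of $[n]$, with variables tested in that order until $f(x)$ is determined. $\mathrm{cost}_{c,p}(f,S)$ is the expected total cost of tests performed by $S$ for random $x$. $\mathsf{OPT}_{\mathcal A}(f,c,p)$ (resp. $\mathsf{OPT}_{\mathcal N}(f,c,p)$) is the minimum of $\mathrm{cost}_{c,p}(f,S)$ over all adaptive (resp. non-adaptive) strategies. A DNF formula is a disjunction of terms, each a conjunction of literals; it is read-once if no variable is negated and distinct terms contain disjoint sets of variables. *)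

theory Defs
  imports Complex_Main
begin

text \<open>Inputs in {0,1}^n are modelled as functions nat => bool that are False
  outside {0..<n}; variable i (for i < n) is the coordinate x i.\<close>

definition cube :: "nat \<Rightarrow> (nat \<Rightarrow> bool) set" where
  "cube n = {x. \<forall>i\<ge>n. x i = False}"

definition prob_input :: "nat \<Rightarrow> (nat \<Rightarrow> real) \<Rightarrow> (nat \<Rightarrow> bool) \<Rightarrow> real" where
  "prob_input n p x = (\<Prod>i<n. if x i then p i else 1 - p i)"

definition determined ::
  "nat \<Rightarrow> ((nat \<Rightarrow> bool) \<Rightarrow> bool) \<Rightarrow> nat set \<Rightarrow> (nat \<Rightarrow> bool) \<Rightarrow> bool" where
  "determined n f S x = (\<forall>x'\<in>cube n. (\<forall>i\<in>S. x' i = x i) \<longrightarrow> f x' = f x)"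

text \<open>Read-once DNF: a nonempty family of pairwise disjoint nonempty terms
  (sets of unnegated variables from {0..<n}).\<close>
definition read_once_dnf :: "nat \<Rightarrow> nat set set \<Rightarrow> bool" where
  "read_once_dnf n T = (finite T \<and> T \<noteq> {} \<and> (\<forall>t\<in>T. t \<noteq> {} \<and> t \<subseteq> {..<n}) \<and>
     (\<forall>t\<in>T. \<forall>t'\<in>T. t \<noteq> t' \<longrightarrow> t \<inter> t' = {}))"

definition dnf_eval :: "nat set set \<Rightarrow> (nat \<Rightarrow> bool) \<Rightarrow> bool" where
  "dnf_eval T x = (\<exists>t\<in>T. \<forall>i\<in>t. x i)"

text \<open>Adaptive strategies: decision trees. Test i l r tests variable i,
  continues with l if x_i = 0 and with r if x_i = 1.\<close>
datatype dtree = Leaf | Test nat dtree dtree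

fun tree_vars :: "dtree \<Rightarrow> nat set" where
  "tree_vars Leaf = {}"
| "tree_vars (Test i l r) = insert i (tree_vars l \<union> tree_vars r)"

fun path_vars :: "dtree \<Rightarrow> (nat \<Rightarrow> bool) \<Rightarrow> nat set" where
  "path_vars Leaf x = {}"
| "path_vars (Test i l r) x = insert i (if x i then path_vars r x else path_vars l x)"

fun path_cost :: "(nat \<Rightarrow> real) \<Rightarrow> dtree \<Rightarrow> (nat \<Rightarrow> bool) \<Rightarrow> real" where
  "path_cost c Leaf x = 0"
| "path_cost c (Test i l r) x = c i + (if x i then path_cost c r x else path_cost c l x)"

definition valid_tree :: "nat \<Rightarrow> ((nat \<Rightarrow> bool) \<Rightarrow> bool) \<Rightarrow> dtree \<Rightarrow> bool" where
  "valid_tree n f t = (tree_vars t \<subseteq> {..<n} \<and>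
     (\<forall>x\<in>cube n. determined n f (path_vars t x) x))"

definition cost_adaptive ::
  "nat \<Rightarrow> ((nat \<Rightarrow> bool) \<Rightarrow> bool) \<Rightarrow> (nat \<Rightarrow> real) \<Rightarrow> (nat \<Rightarrow> real) \<Rightarrow> dtree \<Rightarrow> real" where
  "cost_adaptive n f c p t = (\<Sum>x\<in>cube n. prob_input n p x * path_cost c t x)"

definition OPT_A ::
  "nat \<Rightarrow> ((nat \<Rightarrow> bool) \<Rightarrow> bool) \<Rightarrow> (nat \<Rightarrow> real) \<Rightarrow> (nat \<Rightarrow> real) \<Rightarrow> real" where
  "OPT_A n f c p = (INF t\<in>{t. valid_tree n f t}. cost_adaptive n f c p t)"

text \<open>Non-adaptive strategies: permutations of {0..<n} (as distinct lists);
  variables are tested in order until f(x) is determined.\<close>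
definition perms :: "nat \<Rightarrow> nat list set" where
  "perms n = {\<pi>. distinct \<pi> \<and> set \<pi> = {..<n}}"

definition stop_len ::
  "nat \<Rightarrow> ((nat \<Rightarrow> bool) \<Rightarrow> bool) \<Rightarrow> nat list \<Rightarrow> (nat \<Rightarrow> bool) \<Rightarrow> nat" where
  "stop_len n f \<pi> x = (LEAST k. determined n f (set (take k \<pi>)) x)"

definition cost_nonadaptive ::
  "nat \<Rightarrow> ((nat \<Rightarrow> bool) \<Rightarrow> bool) \<Rightarrow> (nat \<Rightarrow> real) \<Rightarrow> (nat \<Rightarrow> real) \<Rightarrow> nat list \<Rightarrow> real" where
  "cost_nonadaptive n f c p \<pi> =
     (\<Sum>x\<in>cube n. prob_input n p x * (\<Sum>i\<leftarrow>take (stop_len n f \<pi> x) \<pi>. c i))"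

definition OPT_N ::
  "nat \<Rightarrow> ((nat \<Rightarrow> bool) \<Rightarrow> bool) \<Rightarrow> (nat \<Rightarrow> real) \<Rightarrow> (nat \<Rightarrow> real) \<Rightarrow> real" where
  "OPT_N n f c p = Min (cost_nonadaptive n f c p ` perms n)"

end

theory Submission
  imports Defs
begin

text \<open>
  Take k \<approx> n / log n pairwise disjoint terms, each consisting of m \<approx> log n cheap variables
  of cost \<delta> \<approx> 1 / (m 2^m) followed by one bottleneck variable of cost 1. An adaptive
  strategy evaluates the terms one after the other and tests a bottleneck only when all cheap
  variables of its term are 1, which costs O(k / 2^m) in expectation.
  A non-adaptive strategy fixes the order of the bottlenecks in advance. With probability at
  least 2^-(m+2) term j is pivotal: its cheap variables are 1, its bottleneck is 0, and no other
  term has all cheap variables 1. Then f(x) flips with the bottleneck of term j, so this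
  bottleneck, and with it every bottleneck preceding it in the order, must be paid for.
  Summing over j the number of bottlenecks up to j gives at least k^2 / 2, hence a cost
  \<Omega>(k^2 / 2^m) and a gap \<Omega>(k) = \<Omega>(n / log n).
\<close>

section \<open>The cube and product distributions\<close>

lemma cube_0: "cube 0 = {\<lambda>_. False}"
  by (auto simp: cube_def)

lemma cube_Suc: "cube (Suc n) = cube n \<union> (\<lambda>x. x(n := True)) ` cube n"
proof (intro equalityI subsetI)
  fix x assume x: "x \<in> cube (Suc n)"
  show "x \<in> cube n \<union> (\<lambda>x. x(n := True)) ` cube n"
  proof (cases "x n")
    case True
    then have "x = (x(n := False))(n := True)" by (simp add: fun_eq_iff)
    moreover have "x(n := False) \<in> cube n" using x by (auto simp: cube_def)
    ultimately show ?thesis by blast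
  next
    case False
    then have "x \<in> cube n" using x by (auto simp: cube_def) (metis le_antisym not_less_eq_eq)
    then show ?thesis by blast
  qed
qed (auto simp: cube_def)

lemma finite_cube: "finite (cube n)"
  by (induction n) (simp_all add: cube_0 cube_Suc)

lemma sum_cube_Suc:
  "(\<Sum>x\<in>cube (Suc n). g x) = (\<Sum>x\<in>cube n. g x) + (\<Sum>x\<in>cube n. g (x(n := True)))"
proof -
  have "inj_on (\<lambda>x. x(n := True)) (cube n)"
    by (auto simp: inj_on_def cube_def fun_eq_iff)
  moreover have "cube n \<inter> (\<lambda>x. x(n := True)) ` cube n = {}"
    by (auto simp: cube_def)
  ultimately show ?thesis
    unfolding cube_Suc by (simp add: sum.union_disjoint finite_cube sum.reindex)
qed

lemma sum_cube_prod:
  fixes g :: "nat \<Rightarrow> bool \<Rightarrow> 'a :: comm_semiring_1"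
  shows "(\<Sum>x\<in>cube n. \<Prod>i<n. g i (x i)) = (\<Prod>i<n. g i False + g i True)"
proof (induction n)
  case 0
  show ?case by (simp add: cube_0)
next
  case (Suc n)
  let ?G = "\<lambda>x. \<Prod>i<n. g i (x i)"
  have "(\<Prod>i<Suc n. g i (x i)) = ?G x * g n False" if "x \<in> cube n" for x
    using that by (simp add: lessThan_Suc cube_def mult.commute)
  moreover have "(\<Prod>i<Suc n. g i ((x(n := True)) i)) = ?G x * g n True" for x
    by (simp add: lessThan_Suc mult.commute)
  ultimately have "(\<Sum>x\<in>cube (Suc n). \<Prod>i<Suc n. g i (x i))
      = (\<Sum>x\<in>cube n. ?G x * g n False) + (\<Sum>x\<in>cube n. ?G x * g n True)"
    unfolding sum_cube_Suc by simp
  also have "\<dots> = (\<Sum>x\<in>cube n. ?G x) * (g n False + g n True)"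
    by (simp add: sum_distrib_right distrib_left)
  also have "\<dots> = (\<Prod>i<Suc n. g i False + g i True)"
    by (simp add: Suc.IH)
  finally show ?case .
qed

definition expectation :: "nat \<Rightarrow> (nat \<Rightarrow> real) \<Rightarrow> ((nat \<Rightarrow> bool) \<Rightarrow> real) \<Rightarrow> real" where
  "expectation n p g = (\<Sum>x\<in>cube n. prob_input n p x * g x)"

definition prob_event :: "nat \<Rightarrow> (nat \<Rightarrow> real) \<Rightarrow> ((nat \<Rightarrow> bool) \<Rightarrow> bool) \<Rightarrow> real" where
  "prob_event n p E = expectation n p (\<lambda>x. of_bool (E x))"

lemma prob_input_nonneg:
  assumes "\<And>i. 0 \<le> p i" "\<And>i. p i \<le> 1"
  shows "0 \<le> prob_input n p x"
  unfolding prob_input_def using assms by (intro prod_nonneg) simp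

lemma expectation_const [simp]: "expectation n p (\<lambda>_. a) = a"
proof -
  have "(\<Sum>x\<in>cube n. prob_input n p x) = (\<Prod>i<n. (1 - p i) + p i)"
    unfolding prob_input_def using sum_cube_prod[of "\<lambda>i b. if b then p i else 1 - p i" n] by simp
  then show ?thesis by (simp add: expectation_def flip: sum_distrib_right)
qed

lemma expectation_add:
  "expectation n p (\<lambda>x. g x + h x) = expectation n p g + expectation n p h"
  by (simp add: expectation_def distrib_left sum.distrib)

lemma expectation_diff:
  "expectation n p (\<lambda>x. g x - h x) = expectation n p g - expectation n p h"
  by (simp add: expectation_def right_diff_distrib sum_subtractf)

lemma expectation_cmult:
  "expectation n p (\<lambda>x. a * g x) = a * expectation n p g"
  by (simp add: expectation_def sum_distrib_left mult_ac)

lemma expectation_sum: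
  "expectation n p (\<lambda>x. \<Sum>j\<in>J. g j x) = (\<Sum>j\<in>J. expectation n p (g j))"
  unfolding expectation_def by (simp add: sum_distrib_left sum.swap[of _ _ "cube n"])

lemma expectation_sum_list:
  "expectation n p (\<lambda>x. \<Sum>t\<leftarrow>ts. g t x) = (\<Sum>t\<leftarrow>ts. expectation n p (g t))"
  by (induction ts) (simp_all add: expectation_add)

lemma expectation_mono:
  assumes "\<And>i. 0 \<le> p i" "\<And>i. p i \<le> 1" and "\<And>x. x \<in> cube n \<Longrightarrow> g x \<le> h x"
  shows "expectation n p g \<le> expectation n p h"
  unfolding expectation_def
  using assms by (intro sum_mono mult_left_mono prob_input_nonneg) auto

lemma of_bool_Ball_eq_prod:
  "finite A \<Longrightarrow> of_bool (\<forall>i\<in>A. P i) = (\<Prod>i\<in>A. of_bool (P i) :: 'a :: comm_semiring_1)"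
  by (induction A rule: finite_induct) (auto intro!: prod_zero)

lemma prob_pattern:
  assumes "S \<subseteq> {..<n}"
  shows "prob_event n p (\<lambda>x. \<forall>i\<in>S. x i = v i) = (\<Prod>i\<in>S. if v i then p i else 1 - p i)"
proof -
  let ?g = "\<lambda>i b. (if b then p i else 1 - p i) * of_bool (i \<in> S \<longrightarrow> b = v i)"
  have "of_bool (\<forall>i\<in>S. x i = v i) = (\<Prod>i<n. of_bool (i \<in> S \<longrightarrow> x i = v i) :: real)" for x
  proof -
    have "(\<forall>i\<in>S. x i = v i) = (\<forall>i\<in>{..<n}. i \<in> S \<longrightarrow> x i = v i)"
      using assms by auto
    then show ?thesis by (simp add: of_bool_Ball_eq_prod)
  qed
  then have "prob_event n p (\<lambda>x. \<forall>i\<in>S. x i = v i) = (\<Sum>x\<in>cube n. \<Prod>i<n. ?g i (x i))"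
    by (simp add: prob_event_def expectation_def prob_input_def prod.distrib
        del: sum_mult_of_bool_eq)
  also have "\<dots> = (\<Prod>i<n. ?g i False + ?g i True)"
    by (rule sum_cube_prod)
  also have "\<dots> = (\<Prod>i<n. if i \<in> S then (if v i then p i else 1 - p i) else 1)"
    by (intro prod.cong) auto
  also have "\<dots> = (\<Prod>i\<in>{..<n} \<inter> S. if v i then p i else 1 - p i)"
    by (rule prod.inter_restrict[symmetric]) simp
  also have "{..<n} \<inter> S = S"
    using assms by blast
  finally show ?thesis .
qed

lemma prob_pattern_uniform:
  assumes "S \<subseteq> {..<n}"
  shows "prob_event n (\<lambda>_. 1/2) (\<lambda>x. \<forall>i\<in>S. x i = v i) = 1 / 2 ^ card S"
proof -
  have "(\<Prod>i\<in>S. if v i then 1/2 else 1 - 1/2) = (\<Prod>i\<in>S. 1/2 :: real)"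
    by (intro prod.cong) auto
  then show ?thesis using assms by (simp add: prob_pattern power_one_over)
qed

lemma prob_event_diff_Bex_ge:
  assumes "\<And>i. 0 \<le> p i" "\<And>i. p i \<le> 1" and "finite J"
  shows "prob_event n p A - (\<Sum>j\<in>J. prob_event n p (\<lambda>x. A x \<and> B j x))
           \<le> prob_event n p (\<lambda>x. A x \<and> \<not> (\<exists>j\<in>J. B j x))"
proof -
  have "of_bool (A x) - (\<Sum>j\<in>J. of_bool (A x \<and> B j x)) \<le> (of_bool (A x \<and> \<not> (\<exists>j\<in>J. B j x)) :: real)"
    for x
  proof (cases "A x \<and> (\<exists>j\<in>J. B j x)")
    case True
    then obtain j where "j \<in> J" "A x \<and> B j x" by blast
    then have "of_bool (A x \<and> B j x) \<le> (\<Sum>j\<in>J. of_bool (A x \<and> B j x) :: real)"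
      using \<open>finite J\<close> by (intro member_le_sum) auto
    then show ?thesis using True \<open>A x \<and> B j x\<close> by (simp del: sum_of_bool_eq)
  qed (auto simp del: sum_of_bool_eq intro: sum_nonneg)
  then show ?thesis
    unfolding prob_event_def expectation_diff[symmetric] expectation_sum[symmetric]
    using assms by (intro expectation_mono)
qed

lemma expectation_ge_disjoint_events:
  assumes "\<And>i. 0 \<le> p i" "\<And>i. p i \<le> 1" and "finite J"
    and disjoint: "\<And>j j' x. j \<in> J \<Longrightarrow> j' \<in> J \<Longrightarrow> E j x \<Longrightarrow> E j' x \<Longrightarrow> j = j'"
    and bound: "\<And>j x. j \<in> J \<Longrightarrow> x \<in> cube n \<Longrightarrow> E j x \<Longrightarrow> r j \<le> g x"
    and nonneg: "\<And>x. x \<in> cube n \<Longrightarrow> 0 \<le> g x"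
  shows "(\<Sum>j\<in>J. r j * prob_event n p (E j)) \<le> expectation n p g"
proof -
  have "(\<Sum>j\<in>J. r j * of_bool (E j x)) \<le> g x" if x: "x \<in> cube n" for x
  proof (cases "\<exists>j\<in>J. E j x")
    case True
    then obtain j where j: "j \<in> J" "E j x" by blast
    then have "J \<inter> {j. E j x} = {j}" using disjoint by blast
    then show ?thesis using bound[OF j(1) x j(2)] \<open>finite J\<close> by simp
  next
    case False
    then have "J \<inter> {j. E j x} = {}" by blast
    then show ?thesis using nonneg[OF x] \<open>finite J\<close> by simp
  qed
  then show ?thesis
    unfolding prob_event_def expectation_cmult[symmetric] expectation_sum[symmetric]
    using assms(1,2) by (intro expectation_mono)
qed

section \<open>Adaptive strategies\<close>

fun seq_tree :: "dtree \<Rightarrow> dtree \<Rightarrow> dtree" where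
  "seq_tree Leaf u = u"
| "seq_tree (Test i l r) u = Test i (seq_tree l u) (seq_tree r u)"

definition seq_trees :: "dtree list \<Rightarrow> dtree" where
  "seq_trees ts = foldr seq_tree ts Leaf"

fun conj_tree :: "nat list \<Rightarrow> dtree" where
  "conj_tree [] = Leaf"
| "conj_tree (a # as) = Test a Leaf (conj_tree as)"

definition dnf_tree :: "nat list list \<Rightarrow> dtree" where
  "dnf_tree L = seq_trees (map conj_tree L)"

lemma path_vars_seq_trees: "path_vars (seq_trees ts) x = (\<Union>t\<in>set ts. path_vars t x)"
proof -
  have "path_vars (seq_tree t u) x = path_vars t x \<union> path_vars u x" for t u
    by (induction t) auto
  then show ?thesis by (induction ts) (simp_all add: seq_trees_def)
qed

lemma path_cost_seq_trees: "path_cost c (seq_trees ts) x = (\<Sum>t\<leftarrow>ts. path_cost c t x)"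
proof -
  have "path_cost c (seq_tree t u) x = path_cost c t x + path_cost c u x" for t u
    by (induction t) auto
  then show ?thesis by (induction ts) (simp_all add: seq_trees_def)
qed

lemma tree_vars_seq_trees: "tree_vars (seq_trees ts) \<subseteq> (\<Union>t\<in>set ts. tree_vars t)"
proof -
  have "tree_vars (seq_tree t u) \<subseteq> tree_vars t \<union> tree_vars u" for t u
    by (induction t) auto
  then show ?thesis by (induction ts) (auto simp: seq_trees_def)
qed

lemma tree_vars_conj_tree: "tree_vars (conj_tree as) = set as"
  by (induction as) auto

lemma conj_tree_resolves:
  "(\<exists>a\<in>set as. \<not> x a \<and> a \<in> path_vars (conj_tree as) x) \<or> set as \<subseteq> path_vars (conj_tree as) x"
  by (induction as) auto

lemma path_cost_conj_tree_snoc: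
  assumes "\<And>i. 0 \<le> c i"
  shows "path_cost c (conj_tree (as @ [b])) x \<le> sum_list (map c as) + c b * of_bool (\<forall>a\<in>set as. x a)"
proof (induction as)
  case (Cons a as)
  have "0 \<le> sum_list (map c as)" using assms by (intro sum_list_nonneg) auto
  then show ?case using Cons assms by auto
qed simp

lemma path_cost_nonneg: "(\<And>i. 0 \<le> c i) \<Longrightarrow> 0 \<le> path_cost c t x"
  by (induction t) auto

lemma determined_dnf_eval:
  assumes "\<forall>t\<in>T. (\<exists>i\<in>t \<inter> P. \<not> x i) \<or> t \<subseteq> P"
  shows "determined n (dnf_eval T) P x"
  unfolding determined_def dnf_eval_def
proof (intro ballI impI)
  fix x' assume "\<forall>i\<in>P. x' i = x i"
  then have "(\<forall>i\<in>t. x' i) = (\<forall>i\<in>t. x i)" if "t \<in> T" for t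
    using assms that by blast
  then show "(\<exists>t\<in>T. \<forall>i\<in>t. x' i) = (\<exists>t\<in>T. \<forall>i\<in>t. x i)" by blast
qed

lemma valid_dnf_tree:
  assumes "\<forall>l\<in>set L. set l \<subseteq> {..<n}"
  shows "valid_tree n (dnf_eval (set ` set L)) (dnf_tree L)"
  unfolding valid_tree_def
proof (intro conjI ballI)
  show "tree_vars (dnf_tree L) \<subseteq> {..<n}"
    using tree_vars_seq_trees[of "map conj_tree L"] assms
    by (auto simp: dnf_tree_def tree_vars_conj_tree)
  fix x
  show "determined n (dnf_eval (set ` set L)) (path_vars (dnf_tree L) x) x"
  proof (rule determined_dnf_eval, rule ballI)
    fix t assume "t \<in> set ` set L"
    then obtain l where "l \<in> set L" "t = set l" by blast
    moreover have "path_vars (conj_tree l) x \<subseteq> path_vars (dnf_tree L) x"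
      using \<open>l \<in> set L\<close> by (auto simp: dnf_tree_def path_vars_seq_trees)
    ultimately show "(\<exists>i\<in>t \<inter> path_vars (dnf_tree L) x. \<not> x i) \<or> t \<subseteq> path_vars (dnf_tree L) x"
      using conj_tree_resolves[of l x] by blast
  qed
qed

lemma cost_adaptive_dnf_tree:
  "cost_adaptive n f c p (dnf_tree L) = (\<Sum>l\<leftarrow>L. expectation n p (path_cost c (conj_tree l)))"
  by (simp add: cost_adaptive_def dnf_tree_def path_cost_seq_trees expectation_sum_list[symmetric]
      comp_def flip: expectation_def)

lemma expected_cost_conj_tree_snoc:
  assumes "\<And>i. 0 \<le> p i" "\<And>i. p i \<le> 1" "\<And>i. 0 \<le> c i"
  shows "expectation n p (path_cost c (conj_tree (as @ [b])))
           \<le> sum_list (map c as) + c b * prob_event n p (\<lambda>x. \<forall>a\<in>set as. x a)"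
proof -
  have "expectation n p (path_cost c (conj_tree (as @ [b])))
      \<le> expectation n p (\<lambda>x. sum_list (map c as) + c b * of_bool (\<forall>a\<in>set as. x a))"
    using assms by (intro expectation_mono path_cost_conj_tree_snoc)
  then show ?thesis by (simp add: expectation_add expectation_cmult prob_event_def)
qed

lemma cost_adaptive_nonneg:
  assumes "\<And>i. 0 \<le> p i" "\<And>i. p i \<le> 1" "\<And>i. 0 \<le> c i"
  shows "0 \<le> cost_adaptive n f c p t"
  unfolding cost_adaptive_def using assms
  by (intro sum_nonneg mult_nonneg_nonneg prob_input_nonneg path_cost_nonneg)

lemma OPT_A_le:
  assumes "\<And>i. 0 \<le> p i" "\<And>i. p i \<le> 1" "\<And>i. 0 \<le> c i" and "valid_tree n f t"
  shows "OPT_A n f c p \<le> cost_adaptive n f c p t"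
  unfolding OPT_A_def using assms cost_adaptive_nonneg
  by (intro cINF_lower bdd_belowI[where m=0]) auto

lemma OPT_A_nonneg:
  assumes "\<And>i. 0 \<le> p i" "\<And>i. p i \<le> 1" "\<And>i. 0 \<le> c i" and "valid_tree n f t"
  shows "0 \<le> OPT_A n f c p"
  unfolding OPT_A_def using assms cost_adaptive_nonneg
  by (intro cINF_greatest) auto

section \<open>Non-adaptive strategies\<close>

lemma finite_perms: "finite (perms n)"
proof (rule finite_subset)
  show "perms n \<subseteq> {xs. set xs \<subseteq> {..<n} \<and> length xs = n}"
  proof
    fix xs assume "xs \<in> perms n"
    then have "distinct xs" "set xs = {..<n}" by (simp_all add: perms_def)
    then show "xs \<in> {xs. set xs \<subseteq> {..<n} \<and> length xs = n}"
      by (simp flip: distinct_card)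
  qed
qed (rule finite_lists_length_eq, simp)

lemma upt_in_perms: "[0..<n] \<in> perms n"
  by (auto simp: perms_def)

lemma OPT_N_ge:
  assumes "\<And>\<pi>. \<pi> \<in> perms n \<Longrightarrow> a \<le> cost_nonadaptive n f c p \<pi>"
  shows "a \<le> OPT_N n f c p"
  unfolding OPT_N_def using assms finite_perms upt_in_perms by (subst Min_ge_iff) auto

lemma determined_stop_len:
  assumes "\<pi> \<in> perms n" "x \<in> cube n"
  shows "determined n f (set (take (stop_len n f \<pi> x) \<pi>)) x"
proof -
  have "determined n f (set (take (length \<pi>) \<pi>)) x"
    unfolding determined_def
  proof (intro ballI impI)
    fix x' assume x': "x' \<in> cube n" "\<forall>i\<in>set (take (length \<pi>) \<pi>). x' i = x i"
    have "x' = x"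
    proof
      fix i show "x' i = x i"
        using x' assms by (cases "i < n") (auto simp: perms_def cube_def)
    qed
    then show "f x' = f x" by (rule arg_cong)
  qed
  then show ?thesis unfolding stop_len_def by (rule LeastI)
qed

definition prefix_through :: "'a list \<Rightarrow> 'a \<Rightarrow> 'a set" where
  "prefix_through \<pi> b = set (take (LEAST s. b \<in> set (take s \<pi>)) \<pi>)"

lemma mem_prefix_through: "b \<in> set \<pi> \<Longrightarrow> b \<in> prefix_through \<pi> b"
  unfolding prefix_through_def by (rule LeastI[where k="length \<pi>"]) simp

lemma prefix_through_subset:
  "b \<in> set (take s \<pi>) \<Longrightarrow> prefix_through \<pi> b \<subseteq> set (take s \<pi>)"
  unfolding prefix_through_def by (intro set_take_subset_set_take Least_le)

lemma prefix_through_total: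
  assumes "b \<in> set \<pi>" "b' \<in> set \<pi>"
  shows "b \<in> prefix_through \<pi> b' \<or> b' \<in> prefix_through \<pi> b"
proof -
  define l l' where "l = (LEAST s. b \<in> set (take s \<pi>))" and "l' = (LEAST s. b' \<in> set (take s \<pi>))"
  have "prefix_through \<pi> b = set (take l \<pi>)" "prefix_through \<pi> b' = set (take l' \<pi>)"
    by (simp_all add: prefix_through_def l_def l'_def)
  moreover have "set (take l \<pi>) \<subseteq> set (take l' \<pi>) \<or> set (take l' \<pi>) \<subseteq> set (take l \<pi>)"
    using nat_le_linear set_take_subset_set_take by metis
  ultimately show ?thesis using mem_prefix_through[OF assms(1)] mem_prefix_through[OF assms(2)] by blast
qed

lemma sum_card_prefix_through_ge:
  assumes "finite B" "B \<subseteq> set \<pi>"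
  shows "real (card B) ^ 2 / 2 \<le> (\<Sum>b\<in>B. real (card (B \<inter> prefix_through \<pi> b)))"
proof -
  let ?I = "\<lambda>b b'. of_bool (b' \<in> prefix_through \<pi> b) :: real"
  have "real (card B) ^ 2 = (\<Sum>b\<in>B. \<Sum>b'\<in>B. 1)" by (simp add: power2_eq_square)
  \<comment> \<open>of two elements of \<open>B\<close>, one lies in the prefix through the other\<close>
  also have "\<dots> \<le> (\<Sum>b\<in>B. \<Sum>b'\<in>B. ?I b b' + ?I b' b)"
  proof (intro sum_mono)
    fix b b' assume "b \<in> B" "b' \<in> B"
    then show "1 \<le> ?I b b' + ?I b' b"
      using prefix_through_total[of b' \<pi> b] assms(2) by auto
  qed
  also have "\<dots> = 2 * (\<Sum>b\<in>B. \<Sum>b'\<in>B. ?I b b')"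
    by (simp only: sum.distrib sum.swap[of "\<lambda>b b'. ?I b' b"] mult_2)
  also have "(\<Sum>b\<in>B. \<Sum>b'\<in>B. ?I b b') = (\<Sum>b\<in>B. real (card (B \<inter> prefix_through \<pi> b)))"
    using assms(1) by (intro sum.cong) (simp_all add: Int_def)
  finally show ?thesis by simp
qed

lemma cost_prefix_through_le:
  fixes c :: "'a \<Rightarrow> real"
  assumes "distinct \<pi>" "\<And>i. 0 \<le> c i" and "b \<in> set (take s \<pi>)"
  shows "sum c (B \<inter> prefix_through \<pi> b) \<le> (\<Sum>i\<leftarrow>take s \<pi>. c i)"
proof -
  have "sum c (B \<inter> prefix_through \<pi> b) \<le> sum c (set (take s \<pi>))"
    using prefix_through_subset[OF assms(3)] assms(2) by (intro sum_mono2) auto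
  then show ?thesis using assms(1) by (simp add: sum_list_distinct_conv_sum_set)
qed

section \<open>Disjoint terms with a costly bottleneck\<close>

definition cheap_list :: "nat \<Rightarrow> nat \<Rightarrow> nat list" where
  "cheap_list m j = [j * (m + 1)..<j * (m + 1) + m]"

definition bottleneck :: "nat \<Rightarrow> nat \<Rightarrow> nat" where
  "bottleneck m j = j * (m + 1) + m"

definition block_list :: "nat \<Rightarrow> nat \<Rightarrow> nat list" where
  "block_list m j = cheap_list m j @ [bottleneck m j]"

definition block_dnf :: "nat \<Rightarrow> nat \<Rightarrow> nat set set" where
  "block_dnf m k = (\<lambda>j. set (block_list m j)) ` {..<k}"

definition block_cost :: "nat \<Rightarrow> real \<Rightarrow> nat \<Rightarrow> real" where
  "block_cost m \<delta> i = (if i mod (m + 1) = m then 1 else \<delta>)"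

lemma set_block_list: "set (block_list m j) = {j * (m + 1)..<Suc j * (m + 1)}"
  by (auto simp: block_list_def cheap_list_def bottleneck_def)

lemma mem_block_list: "i \<in> set (block_list m j) \<longleftrightarrow> i div (m + 1) = j"
  unfolding set_block_list
  by (metis atLeastLessThan_iff div_nat_eqI div_times_less_eq_dividend dividend_less_div_times
      mult.commute mult_Suc zero_less_Suc add.commute plus_1_eq_Suc)

lemma distinct_block_list: "distinct (block_list m j)"
  by (simp add: block_list_def cheap_list_def bottleneck_def)

lemma block_cost_bottleneck [simp]: "block_cost m \<delta> (bottleneck m j) = 1"
  unfolding block_cost_def bottleneck_def by (metis mod_less lessI mod_mult_self3 Suc_eq_plus1)

lemma block_cost_cheap: "i \<in> set (cheap_list m j) \<Longrightarrow> block_cost m \<delta> i = \<delta>"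
proof -
  assume "i \<in> set (cheap_list m j)"
  then obtain r where "i = j * (m + 1) + r" "r < m"
    by (auto simp: cheap_list_def) (metis add_diff_inverse_nat add_less_cancel_left not_less)
  then have "i mod (m + 1) = r" by (metis mod_less less_SucI mod_mult_self3 Suc_eq_plus1)
  then show ?thesis using \<open>r < m\<close> by (simp add: block_cost_def)
qed

lemma inj_bottleneck: "inj (bottleneck m)"
  by (rule injI) (simp add: bottleneck_def del: mult_Suc_right)

lemma block_list_subset:
  assumes "j < k" "k * (m + 1) \<le> n"
  shows "set (block_list m j) \<subseteq> {..<n}"
proof -
  have "Suc j * (m + 1) \<le> n"
    using assms by (meson Suc_leI le_trans mult_le_mono1)
  then show ?thesis by (auto simp: set_block_list)
qed

lemma read_once_block_dnf:
  assumes "1 \<le> k" "k * (m + 1) \<le> n"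
  shows "read_once_dnf n (block_dnf m k)"
  unfolding read_once_dnf_def block_dnf_def
proof (intro conjI ballI impI)
  show "(\<lambda>j. set (block_list m j)) ` {..<k} \<noteq> {}"
    using assms(1) by (simp add: lessThan_empty_iff)
  fix t assume "t \<in> (\<lambda>j. set (block_list m j)) ` {..<k}"
  then obtain j where "j < k" "t = set (block_list m j)" by blast
  then show "t \<noteq> {}" "t \<subseteq> {..<n}"
    using block_list_subset[OF _ assms(2)] by (auto simp: block_list_def)
  fix t' assume "t' \<in> (\<lambda>j. set (block_list m j)) ` {..<k}" "t \<noteq> t'"
  then show "t \<inter> t' = {}"
    using \<open>t = set (block_list m j)\<close> by (auto simp: mem_block_list)
qed simp

lemma valid_block_tree:
  assumes "k * (m + 1) \<le> n"
  shows "valid_tree n (dnf_eval (block_dnf m k)) (dnf_tree (map (block_list m) [0..<k]))"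
proof -
  have "\<forall>l\<in>set (map (block_list m) [0..<k]). set l \<subseteq> {..<n}"
    using block_list_subset[OF _ assms] by (auto simp del: set_append)
  moreover have "set ` set (map (block_list m) [0..<k]) = block_dnf m k"
    by (auto simp: block_dnf_def simp del: set_append)
  ultimately show ?thesis by (metis valid_dnf_tree)
qed

lemma cost_adaptive_block_tree_le:
  assumes "0 \<le> \<delta>" "k * (m + 1) \<le> n"
  shows "cost_adaptive n f (block_cost m \<delta>) (\<lambda>_. 1/2) (dnf_tree (map (block_list m) [0..<k]))
           \<le> real k * (real m * \<delta> + 1 / 2 ^ m)"
proof -
  have "expectation n (\<lambda>_. 1/2) (path_cost (block_cost m \<delta>) (conj_tree (block_list m j)))
          \<le> real m * \<delta> + 1 / 2 ^ m" if "j < k" for j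
  proof -
    have "sum_list (map (block_cost m \<delta>) (cheap_list m j)) = sum_list (map (\<lambda>_. \<delta>) (cheap_list m j))"
      by (intro arg_cong[where f=sum_list] map_cong refl) (rule block_cost_cheap)
    also have "\<dots> = real m * \<delta>"
      by (simp add: sum_list_triv cheap_list_def)
    finally have "sum_list (map (block_cost m \<delta>) (cheap_list m j)) = real m * \<delta>" .
    moreover have "set (cheap_list m j) \<subseteq> {..<n}"
      using block_list_subset[OF that assms(2)] by (simp add: block_list_def)
    then have "prob_event n (\<lambda>_. 1/2) (\<lambda>x. \<forall>a\<in>set (cheap_list m j). x a) = 1 / 2 ^ m"
      using prob_pattern_uniform[of "set (cheap_list m j)" n "\<lambda>_. True"] by (simp add: cheap_list_def)
    moreover have "0 \<le> block_cost m \<delta> i" for i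
      using assms(1) by (simp add: block_cost_def)
    ultimately show ?thesis
      using expected_cost_conj_tree_snoc[of "\<lambda>_. 1/2" "block_cost m \<delta>" n "cheap_list m j" "bottleneck m j"]
      by (simp add: block_list_def)
  qed
  then have "(\<Sum>j\<leftarrow>[0..<k]. expectation n (\<lambda>_. 1/2) (path_cost (block_cost m \<delta>) (conj_tree (block_list m j))))
      \<le> (\<Sum>j\<leftarrow>[0..<k]. real m * \<delta> + 1 / 2 ^ m)"
    by (intro sum_list_mono) simp
  then show ?thesis by (simp add: cost_adaptive_dnf_tree comp_def sum_list_triv)
qed

definition pivotal :: "nat \<Rightarrow> nat \<Rightarrow> nat \<Rightarrow> (nat \<Rightarrow> bool) \<Rightarrow> bool" where
  "pivotal m k j x \<longleftrightarrow> (\<forall>i\<in>set (cheap_list m j). x i) \<and> \<not> x (bottleneck m j) \<and>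
     \<not> (\<exists>j'\<in>{..<k} - {j}. \<forall>i\<in>set (cheap_list m j'). x i)"

lemma pivotal_unique: "pivotal m k j x \<Longrightarrow> pivotal m k j' x \<Longrightarrow> j < k \<Longrightarrow> j' < k \<Longrightarrow> j = j'"
  unfolding pivotal_def by blast

lemma bottleneck_mem_determining:
  assumes "k * (m + 1) \<le> n" "j < k" "x \<in> cube n" "pivotal m k j x"
    and "determined n (dnf_eval (block_dnf m k)) S x"
  shows "bottleneck m j \<in> S"
proof (rule ccontr)
  assume not_tested: "bottleneck m j \<notin> S"
  define x' where "x' = x(bottleneck m j := True)"
  have "bottleneck m j < n"
    using block_list_subset[OF assms(2,1)] by (auto simp: block_list_def)
  then have "x' \<in> cube n" using assms(3) by (auto simp: cube_def x'_def)
  moreover have "\<forall>i\<in>S. x' i = x i" using not_tested by (simp add: x'_def)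
  moreover have "dnf_eval (block_dnf m k) x'"
    unfolding dnf_eval_def block_dnf_def using assms(2,4)
    by (auto simp: block_list_def x'_def pivotal_def)
  moreover have "\<not> dnf_eval (block_dnf m k) x"
  proof
    assume "dnf_eval (block_dnf m k) x"
    then obtain j' where "j' < k" "\<forall>i\<in>set (block_list m j'). x i"
      by (auto simp: dnf_eval_def block_dnf_def)
    then show False using assms(4) by (cases "j' = j") (auto simp: pivotal_def block_list_def)
  qed
  ultimately show False using assms(5) unfolding determined_def by blast
qed

lemma inverse_pow2_diff_ge:
  fixes j m :: nat
  assumes "2 * (j + 1) \<le> 2 ^ m"
  shows "1 / 2 ^ (m + 2) \<le> 1 / 2 ^ (m + 1) - real j / 2 ^ (2 * m + 1)"
proof -
  define X :: real where "X = 2 ^ m"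
  have "real (2 * (j + 1)) \<le> real (2 ^ m)"
    using assms by (simp only: of_nat_le_iff)
  then have "2 * real j \<le> X" by (simp add: X_def)
  moreover have "0 < X" by (simp add: X_def)
  moreover have "(2::real) ^ (m + 1) = 2 * X" "(2::real) ^ (m + 2) = 4 * X"
    by (simp_all add: X_def power_add)
  moreover have "(2::real) ^ (2 * m + 1) = 2 * X * X"
    unfolding X_def power_add mult.commute[of 2 m] power_mult by (simp add: power2_eq_square)
  ultimately show ?thesis by (simp add: divide_simps)
qed

lemma prob_pivotal_ge:
  assumes "k * (m + 1) \<le> n" "j < k" "2 * k \<le> 2 ^ m"
  shows "1 / 2 ^ (m + 2) \<le> prob_event n (\<lambda>_. 1/2) (pivotal m k j)"
proof -
  define v where "v i \<longleftrightarrow> i \<noteq> bottleneck m j" for i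
  define J where "J = {..<k} - {j}"
  let ?A = "\<lambda>x. \<forall>i\<in>set (block_list m j). x i = v i"
  let ?B = "\<lambda>j' x. \<forall>i\<in>set (cheap_list m j'). x i"
  have disjoint: "set (block_list m j) \<inter> set (cheap_list m j') = {}" if "j' \<in> J" for j'
  proof -
    have "set (cheap_list m j') \<subseteq> set (block_list m j')" by (auto simp: block_list_def)
    then show ?thesis using that by (auto simp: J_def mem_block_list)
  qed
  have "pivotal m k j = (\<lambda>x. ?A x \<and> \<not> (\<exists>j'\<in>J. ?B j' x))"
    using distinct_block_list[of m j]
    by (auto simp: fun_eq_iff pivotal_def J_def v_def block_list_def)
  moreover have "prob_event n (\<lambda>_. 1/2) ?A = 1 / 2 ^ (m + 1)"
    using prob_pattern_uniform[OF block_list_subset[OF assms(2,1)]] distinct_block_list[of m j]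
    by (simp add: distinct_card block_list_def cheap_list_def)
  moreover have "prob_event n (\<lambda>_. 1/2) (\<lambda>x. ?A x \<and> ?B j' x) = 1 / 2 ^ (2 * m + 1)"
    if "j' \<in> J" for j'
  proof -
    have "(\<lambda>x. ?A x \<and> ?B j' x) = (\<lambda>x. \<forall>i\<in>set (block_list m j) \<union> set (cheap_list m j'). x i = v i)"
      using disjoint[OF that] by (auto simp: fun_eq_iff v_def block_list_def)
    moreover have "set (block_list m j) \<union> set (cheap_list m j') \<subseteq> {..<n}"
    proof -
      have "j' < k" using that by (simp add: J_def)
      then show ?thesis
        using block_list_subset[OF assms(2,1)] block_list_subset[OF _ assms(1), of j']
        by (auto simp: block_list_def)
    qed
    moreover have "card (set (block_list m j) \<union> set (cheap_list m j')) = 2 * m + 1"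
      using disjoint[OF that] distinct_block_list[of m j]
      by (simp add: card_Un_disjoint distinct_card block_list_def cheap_list_def del: set_append)
    ultimately show ?thesis by (simp add: prob_pattern_uniform)
  qed
  moreover have "1 / 2 ^ (m + 2) \<le> 1 / 2 ^ (m + 1) - real (card J) / 2 ^ (2 * m + 1)"
    using assms(2,3) by (intro inverse_pow2_diff_ge) (simp add: J_def)
  ultimately show ?thesis
    using prob_event_diff_Bex_ge[of "\<lambda>_. 1/2" J n ?A ?B] by (simp add: J_def)
qed

lemma cost_nonadaptive_block_ge:
  assumes "k * (m + 1) \<le> n" "2 * k \<le> 2 ^ m" "0 \<le> \<delta>" "\<pi> \<in> perms n"
  shows "real k ^ 2 / 2 ^ (m + 3)
           \<le> cost_nonadaptive n (dnf_eval (block_dnf m k)) (block_cost m \<delta>) (\<lambda>_. 1/2) \<pi>"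
proof -
  let ?c = "block_cost m \<delta>"
  let ?f = "dnf_eval (block_dnf m k)"
  define B where "B = bottleneck m ` {..<k}"
  define r where "r j = real (card (B \<inter> prefix_through \<pi> (bottleneck m j)))" for j
  have c_nonneg: "0 \<le> ?c i" for i
    using assms(3) by (simp add: block_cost_def)
  have "B \<subseteq> set \<pi>"
    using assms(4) block_list_subset[OF _ assms(1)] by (auto simp: B_def perms_def block_list_def)
  moreover have "card B = k"
    by (simp add: B_def card_image inj_on_subset[OF inj_bottleneck])
  ultimately have "real k ^ 2 / 2 \<le> (\<Sum>j<k. r j)"
    using sum_card_prefix_through_ge[of B \<pi>]
    by (simp add: B_def r_def sum.reindex inj_on_subset[OF inj_bottleneck])
  then have "(real k ^ 2 / 2) / 2 ^ (m + 2) \<le> (\<Sum>j<k. r j) / 2 ^ (m + 2)"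
    by (rule divide_right_mono) simp
  then have "real k ^ 2 / 2 ^ (m + 3) \<le> (\<Sum>j<k. r j * (1 / 2 ^ (m + 2)))"
    by (simp add: sum_divide_distrib power_add)
  also have "\<dots> \<le> (\<Sum>j<k. r j * prob_event n (\<lambda>_. 1/2) (pivotal m k j))"
    using prob_pivotal_ge[OF assms(1) _ assms(2)] by (intro sum_mono mult_left_mono) (simp_all add: r_def)
  also have "\<dots> \<le> expectation n (\<lambda>_. 1/2) (\<lambda>x. \<Sum>i\<leftarrow>take (stop_len n ?f \<pi> x) \<pi>. ?c i)"
  proof (rule expectation_ge_disjoint_events)
    fix j x assume "j \<in> {..<k}" "x \<in> cube n" "pivotal m k j x"
    then have "bottleneck m j \<in> set (take (stop_len n ?f \<pi> x) \<pi>)"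
      using bottleneck_mem_determining[OF assms(1)] determined_stop_len[OF assms(4)] by blast
    moreover have "sum ?c (B \<inter> prefix_through \<pi> (bottleneck m j))
        = (\<Sum>i\<in>B \<inter> prefix_through \<pi> (bottleneck m j). 1)"
      by (intro sum.cong) (auto simp: B_def)
    then have "r j = sum ?c (B \<inter> prefix_through \<pi> (bottleneck m j))"
      by (simp add: r_def)
    ultimately show "r j \<le> (\<Sum>i\<leftarrow>take (stop_len n ?f \<pi> x) \<pi>. ?c i)"
      using assms(4) c_nonneg by (simp add: cost_prefix_through_le perms_def)
  qed (use pivotal_unique c_nonneg in \<open>auto intro!: sum_list_nonneg\<close>)
  also have "\<dots> = cost_nonadaptive n ?f ?c (\<lambda>_. 1/2) \<pi>"
    by (simp add: cost_nonadaptive_def expectation_def)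
  finally show ?thesis .
qed

lemma OPT_gap_block_dnf:
  assumes "k * (m + 1) \<le> n" "2 * k \<le> 2 ^ m" and "0 \<le> \<delta>" "real m * \<delta> \<le> 1 / 2 ^ m"
    and "a \<le> real k / 16"
  shows "a * OPT_A n (dnf_eval (block_dnf m k)) (block_cost m \<delta>) (\<lambda>_. 1/2)
           \<le> OPT_N n (dnf_eval (block_dnf m k)) (block_cost m \<delta>) (\<lambda>_. 1/2)"
proof -
  let ?f = "dnf_eval (block_dnf m k)" and ?c = "block_cost m \<delta>"
  have c_nonneg: "0 \<le> ?c i" for i
    using assms(3) by (simp add: block_cost_def)
  note valid = valid_block_tree[OF assms(1)]
  have "OPT_A n ?f ?c (\<lambda>_. 1/2) \<le> cost_adaptive n ?f ?c (\<lambda>_. 1/2) (dnf_tree (map (block_list m) [0..<k]))"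
    using c_nonneg valid by (intro OPT_A_le) simp_all
  also have "\<dots> \<le> real k * (real m * \<delta> + 1 / 2 ^ m)"
    by (rule cost_adaptive_block_tree_le[OF assms(3,1)])
  also have "\<dots> \<le> real k * (2 / 2 ^ m)"
    using assms(4) by (intro mult_left_mono) simp_all
  moreover have "0 \<le> OPT_A n ?f ?c (\<lambda>_. 1/2)"
    using c_nonneg valid by (intro OPT_A_nonneg) simp_all
  ultimately have "a * OPT_A n ?f ?c (\<lambda>_. 1/2) \<le> real k / 16 * (real k * (2 / 2 ^ m))"
    using assms(5) by (meson mult_mono order_trans mult_right_mono of_nat_0_le_iff zero_le_divide_iff zero_le_numeral)
  also have "\<dots> = real k ^ 2 / 2 ^ (m + 3)"
    by (simp add: power_add power2_eq_square)
  also have "\<dots> \<le> OPT_N n ?f ?c (\<lambda>_. 1/2)"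
    using cost_nonadaptive_block_ge[OF assms(1-3)] by (rule OPT_N_ge)
  finally show ?thesis .
qed

section \<open>Choice of the parameters\<close>

lemma ln_2_ge_half: "1 / 2 \<le> ln (2 :: real)"
proof -
  have "exp (1 / 2 :: real) ^ 2 = exp 1"
    by (simp add: power2_eq_square flip: exp_add)
  also have "\<dots> \<le> 2 ^ 2"
    using exp_le by simp
  finally have "exp (1 / 2 :: real) \<le> 2"
    by (rule power2_le_imp_le) simp
  then show ?thesis using ln_ge_iff[of 2 "1 / 2"] by simp
qed

lemma Suc_exponent_le_ln:
  assumes "1 \<le> m" "2 ^ m \<le> n"
  shows "real m + 1 \<le> 4 * ln (real n)"
proof -
  have "(2::real) ^ m \<le> real n"
    using assms(2) by (metis of_nat_le_iff of_nat_numeral of_nat_power)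
  then have "ln ((2::real) ^ m) \<le> ln (real n)"
    by (rule ln_mono) simp
  then have "real m * ln 2 \<le> ln (real n)"
    by (simp only: ln_realpow)
  moreover have "real m / 2 \<le> real m * ln 2"
    using mult_left_mono[OF ln_2_ge_half, of "real m"] by simp
  ultimately show ?thesis
    using assms(1) by linarith
qed

lemma exists_block_parameters:
  assumes "8 < n"
  obtains m k where "1 \<le> k" "k * (m + 1) \<le> n" "2 * k \<le> 2 ^ m"
    and "real n / ln (real n) \<le> 8 * real k"
proof -
  obtain m where m: "2 ^ m \<le> n" "n < 2 ^ (m + 1)"
    using ex_power_ivl1[of 2 n] assms by auto
  have "3 \<le> m"
  proof (rule ccontr)
    assume "\<not> 3 \<le> m"
    then have "(2::nat) ^ (m + 1) \<le> 2 ^ 3" by (intro power_increasing) simp_all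
    then show False using m(2) assms by simp
  qed
  then have "2 * (m + 1) \<le> 2 ^ m"
    by (induction m rule: dec_induct) simp_all
  define k where "k = n div (m + 1)"
  define K where "K = k * (m + 1)"
  have k_le: "K \<le> n" and n_lt: "n < K + (m + 1)"
    unfolding K_def k_def using div_times_less_eq_dividend mod_less_divisor[of "m + 1" n]
      div_mult_mod_eq[of n "m + 1"] by (simp, linarith)
  have "2 * (m + 1) \<le> n"
    using \<open>2 * (m + 1) \<le> 2 ^ m\<close> m(1) by (rule order_trans)
  then have n_le: "n \<le> 2 * K"
    using n_lt by presburger
  have "1 \<le> k" using n_le assms by (cases "k = 0") (simp_all add: K_def)
  moreover have "2 * k \<le> 2 ^ m"
  proof -
    have "k * 4 \<le> K" unfolding K_def using \<open>3 \<le> m\<close> by (intro mult_le_mono2) simp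
    then show ?thesis using k_le m(2) by simp
  qed
  moreover have "real n / ln (real n) \<le> 8 * real k"
  proof -
    have "real m + 1 \<le> 4 * ln (real n)"
      using \<open>3 \<le> m\<close> m(1) by (intro Suc_exponent_le_ln) simp_all
    moreover have "real n \<le> 2 * real k * (real m + 1)"
    proof -
      have "real n \<le> real (2 * K)" using n_le by (simp only: of_nat_le_iff)
      then show ?thesis by (simp add: K_def algebra_simps)
    qed
    ultimately have "real n \<le> 2 * real k * (4 * ln (real n))"
      by (meson mult_left_mono order_trans of_nat_0_le_iff zero_le_mult_iff zero_le_numeral)
    moreover have "0 < ln (real n)" using assms by simp
    ultimately show ?thesis by (simp add: divide_simps mult_ac)
  qed
  ultimately show ?thesis using k_le that unfolding K_def by blast
qed

lemma exists_read_once_dnf_gap: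
  assumes "8 < n" "a \<le> real n / (128 * ln (real n))"
  shows "\<exists>T c. read_once_dnf n T \<and> (\<forall>i<n. 0 < c i) \<and>
           a * OPT_A n (dnf_eval T) c (\<lambda>_. 1/2) \<le> OPT_N n (dnf_eval T) c (\<lambda>_. 1/2)"
proof -
  obtain m k where mk: "1 \<le> k" "k * (m + 1) \<le> n" "2 * k \<le> 2 ^ m"
    and ratio: "real n / ln (real n) \<le> 8 * real k"
    using exists_block_parameters[OF assms(1)] .
  \<comment> \<open>the \<open>m\<close> cheap variables of a term then cost no more than the expected \<open>2^-m\<close> of its bottleneck\<close>
  define \<delta> :: real where "\<delta> = 1 / ((real m + 1) * 2 ^ m)"
  have \<delta>: "0 < \<delta>" "real m * \<delta> \<le> 1 / 2 ^ m"
    by (simp_all add: \<delta>_def divide_simps)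
  have "a \<le> real k / 16"
    using assms(2) ratio by simp
  then have "a * OPT_A n (dnf_eval (block_dnf m k)) (block_cost m \<delta>) (\<lambda>_. 1/2)
      \<le> OPT_N n (dnf_eval (block_dnf m k)) (block_cost m \<delta>) (\<lambda>_. 1/2)"
    using \<delta> mk by (intro OPT_gap_block_dnf) simp_all
  moreover have "\<forall>i<n. 0 < block_cost m \<delta> i"
    using \<delta>(1) by (simp add: block_cost_def)
  ultimately show ?thesis
    using read_once_block_dnf[OF mk(1,2)] by blast
qed

theorem theorem5:
  fixes \<epsilon> :: real
  assumes "0 < \<epsilon>" and "\<epsilon> < 1"
  shows "\<exists>n\<^sub>\<epsilon>::nat. n\<^sub>\<epsilon> > 0 \<and> (\<exists>c\<^sub>\<epsilon>::real. c\<^sub>\<epsilon> > 0 \<and>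
           (\<forall>n::nat. n > n\<^sub>\<epsilon> \<longrightarrow>
              (\<exists>(T::nat set set) (c::nat \<Rightarrow> real).
                 read_once_dnf n T \<and> (\<forall>i<n. c i > 0) \<and>
                 OPT_N n (dnf_eval T) c (\<lambda>_. 1/2) \<ge>
                   c\<^sub>\<epsilon> * (real n powr (1 - \<epsilon>) / ln (real n)) *
                   OPT_A n (dnf_eval T) c (\<lambda>_. 1/2))))"
proof (intro exI[of _ "8::nat"] conjI exI[of _ "1/128::real"] allI impI)
  fix n :: nat assume "8 < n"
  have "real n powr (1 - \<epsilon>) \<le> real n"
    using \<open>8 < n\<close> powr_mono[of "1 - \<epsilon>" 1 "real n"] assms by simp
  then have "1/128 * (real n powr (1 - \<epsilon>) / ln (real n)) \<le> real n / (128 * ln (real n))"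
    using \<open>8 < n\<close> by (simp add: divide_right_mono)
  from exists_read_once_dnf_gap[OF \<open>8 < n\<close> this]
  show "\<exists>T c. read_once_dnf n T \<and> (\<forall>i<n. c i > 0) \<and>
      OPT_N n (dnf_eval T) c (\<lambda>_. 1/2)
        \<ge> 1/128 * (real n powr (1 - \<epsilon>) / ln (real n)) * OPT_A n (dnf_eval T) c (\<lambda>_. 1/2)" .
qed simp_all

end
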